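(* Let $H$ be a real Hilbert space, $T_n:H\to H$ for every $n\in\mathbb{N}$, and $(\gamma_n)$ a sequence of positive reals with $\sum_{n=0}^\infty\gamma_n^2=\infty$. Assume that $(T_n)$ is jointly firmly nonexpansive with respect to $(\gamma_n)$ and that $F:=\bigcap_{n\in\mathbb{N}}Fix(T_n)\neq\emptyset$. Let $x\in H$, $x_0:=x$, $x_{n+1}:=T_nx_n$ for all $n$. Then $(x_n)$ converges weakly to a point of $F$.
   Context: $(T_n)$ is jointly firmly nonexpansive w.r.t. $(\gamma_n)$ if for all $n,m\in\mathbb{N}$, $x,y\in H$, $\alpha,\beta\in[0,1]$ with $(1-\alpha)\gamma_n=(1-\beta)\gamma_m$: $\|T_nx-T_my\|\le\|((1-\alpha)x+\alpha T_nx)-((1-\beta)y+\beta T_my)\|$. $Fix(T)$ is the fixed point set of $T$. *)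

theory Defs
  imports "HOL-Analysis.Analysis"
begin

definition Fix :: "('a \<Rightarrow> 'a) \<Rightarrow> 'a set" where
  "Fix T = {x. T x = x}"

definition jointly_firmly_nonexpansive ::
  "(nat \<Rightarrow> 'a::real_normed_vector \<Rightarrow> 'a) \<Rightarrow> (nat \<Rightarrow> real) \<Rightarrow> bool" where
  "jointly_firmly_nonexpansive T \<gamma> \<longleftrightarrow>
     (\<forall>n m x y \<alpha> \<beta>. \<alpha> \<in> {0..1} \<longrightarrow> \<beta> \<in> {0..1} \<longrightarrow>
        (1 - \<alpha>) * \<gamma> n = (1 - \<beta>) * \<gamma> m \<longrightarrow>
        norm (T n x - T m y) \<le>
          norm (((1 - \<alpha>) *\<^sub>R x + \<alpha> *\<^sub>R T n x) - ((1 - \<beta>) *\<^sub>R y + \<beta> *\<^sub>R T m y)))"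

definition weakly_convergent_to :: "(nat \<Rightarrow> 'a::real_inner) \<Rightarrow> 'a \<Rightarrow> bool" where
  "weakly_convergent_to x p \<longleftrightarrow> (\<forall>y. (\<lambda>n. inner (x n) y) \<longlonglongrightarrow> inner p y)"

end

theory Submission
  imports Defs "HOL-Library.Diagonal_Subsequence"
begin

text \<open>
  Choosing \<alpha> = 1 - s/\<gamma> n and \<beta> = 1 - s/\<gamma> m with s \<rightarrow> 0 turns joint firm nonexpansiveness
  into the monotonicity inequality
  \<langle>T n a - T m b, (a - T n a)/\<gamma> n - (b - T m b)/\<gamma> m\<rangle> \<ge> 0.
  Taking b a common fixed point makes the iterates Fejer monotone with respect to F and the
  squared steps summable; taking b = x n makes the norms of the residuals
  (x n - x (n+1))/\<gamma> n nonincreasing, so \<Sum> \<gamma> n ^ 2 = \<infinity> forces them to 0.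
  Testing against arbitrary b then shows that every weak cluster point is fixed by every T m,
  and Opial's lemma gives weak convergence.
\<close>

lemma inner_ge_zero_if_norm_le_norm_add:
  fixes b c :: "'a::real_inner"
  assumes "\<delta> > 0" and le: "\<And>s. 0 < s \<Longrightarrow> s \<le> \<delta> \<Longrightarrow> norm b \<le> norm (b + s *\<^sub>R c)"
  shows "inner b c \<ge> 0"
proof (rule ccontr)
  assume "\<not> inner b c \<ge> 0"
  define s where "s = min \<delta> (- inner b c / (inner c c + 1))"
  have "inner c c + 1 > 0"
    by (simp add: add_nonneg_pos)
  then have "0 < s" "s \<le> \<delta>"
    using \<open>\<delta> > 0\<close> \<open>\<not> inner b c \<ge> 0\<close>
    by (auto simp: s_def add_pos_nonneg divide_neg_pos)
  have "s \<le> - inner b c / (inner c c + 1)"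
    by (simp add: s_def)
  then have "s * (inner c c + 1) \<le> - inner b c"
    using \<open>inner c c + 1 > 0\<close> by (simp add: field_simps)
  then have "s * inner c c < - inner b c"
    using \<open>0 < s\<close> by (simp add: algebra_simps)
  then have "s * (s * inner c c) < s * (- inner b c)"
    using \<open>0 < s\<close> by (rule mult_strict_left_mono)
  moreover have "s * inner b c < 0"
    using \<open>0 < s\<close> \<open>\<not> inner b c \<ge> 0\<close> by (simp add: mult_pos_neg)
  ultimately have "2 * s * inner b c + s * s * inner c c < 0"
    by (simp add: algebra_simps)
  moreover have "norm b ^ 2 \<le> norm (b + s *\<^sub>R c) ^ 2"
    using le[OF \<open>0 < s\<close> \<open>s \<le> \<delta>\<close>] by (simp add: power_mono)
  ultimately show False
    by (simp add: power2_norm_eq_inner inner_add_left inner_add_right inner_commute algebra_simps)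
qed

lemma parallelogram_law:
  fixes a b :: "'a::real_inner"
  shows "norm (a + b) ^ 2 + norm (a - b) ^ 2 = 2 * norm a ^ 2 + 2 * norm b ^ 2"
  by (simp add: power2_norm_eq_inner inner_add_left inner_add_right inner_diff_left
      inner_diff_right inner_commute)

lemma power2_norm_add:
  fixes a b :: "'a::real_inner"
  shows "norm (a + b) ^ 2 = norm a ^ 2 + 2 * inner a b + norm b ^ 2"
  by (simp add: power2_norm_eq_inner inner_add_left inner_add_right inner_commute)

lemma nearest_point_exists:
  fixes C :: "'a::{real_inner,complete_space} set"
  assumes "closed C" and "convex C" and "C \<noteq> {}"
  shows "\<exists>p\<in>C. \<forall>c\<in>C. norm (y - p) \<le> norm (y - c)"
proof -
  define d where "d = (INF c\<in>C. norm (y - c) ^ 2)"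
  have bdd: "bdd_below ((\<lambda>c. norm (y - c) ^ 2) ` C)"
    by (rule bdd_belowI[of _ 0]) auto
  have d_le: "d \<le> norm (y - c) ^ 2" if "c \<in> C" for c
    unfolding d_def using bdd that by (rule cINF_lower)
  have "\<exists>c\<in>C. norm (y - c) ^ 2 < d + 1 / Suc n" for n
    using cINF_less_iff[OF _ bdd, of "d + 1 / Suc n"] \<open>C \<noteq> {}\<close> unfolding d_def by simp
  then obtain cs where cs_in: "\<And>n. cs n \<in> C" and cs_close: "\<And>n. norm (y - cs n) ^ 2 < d + 1 / Suc n"
    by metis
  have cs_dist: "norm (cs m - cs n) ^ 2 \<le> 2 / Suc m + 2 / Suc n" for m n
  proof -
    have "(1/2) *\<^sub>R cs m + (1/2) *\<^sub>R cs n \<in> C"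
      by (intro convexD[OF \<open>convex C\<close>] cs_in) auto
    then have "4 * d \<le> 4 * norm (y - ((1/2) *\<^sub>R cs m + (1/2) *\<^sub>R cs n)) ^ 2"
      using d_le by simp
    also have "\<dots> = norm ((y - cs m) + (y - cs n)) ^ 2"
    proof -
      have "(y - cs m) + (y - cs n) = 2 *\<^sub>R (y - ((1/2) *\<^sub>R cs m + (1/2) *\<^sub>R cs n))"
        by (simp add: algebra_simps flip: scaleR_2)
      then show ?thesis by (simp add: power_mult_distrib)
    qed
    finally show ?thesis
      using parallelogram_law[of "y - cs m" "y - cs n"] cs_close[of m] cs_close[of n]
      by (simp add: norm_minus_commute)
  qed
  have "Cauchy cs"
  proof (rule CauchyI)
    fix e :: real assume "e > 0"
    obtain N :: nat where N: "4 / e ^ 2 < N"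
      using reals_Archimedean2 by blast
    have "norm (cs m - cs n) < e" if "m \<ge> N" "n \<ge> N" for m n
    proof -
      have "2 / real (Suc m) \<le> 2 / Suc N" "2 / real (Suc n) \<le> 2 / Suc N"
        using that by (simp_all add: frac_le)
      then have "2 / real (Suc m) + 2 / Suc n \<le> 4 / Suc N"
        by simp
      also have "\<dots> < e ^ 2"
        using N \<open>e > 0\<close> by (simp add: field_simps add_pos_pos add.commute add_strict_increasing)
      finally show ?thesis
        using cs_dist[of m n] \<open>e > 0\<close> by (smt (verit) power_less_imp_less_base)
    qed
    then show "\<exists>M. \<forall>m\<ge>M. \<forall>n\<ge>M. norm (cs m - cs n) < e" by blast
  qed
  then obtain p where lim: "cs \<longlonglongrightarrow> p"
    using Cauchy_convergent_iff convergent_def by blast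
  have "p \<in> C"
    using \<open>closed C\<close> lim cs_in closed_sequential_limits by blast
  have "norm (y - p) ^ 2 \<le> d"
  proof (rule LIMSEQ_le)
    show "(\<lambda>n. norm (y - cs n) ^ 2) \<longlonglongrightarrow> norm (y - p) ^ 2"
      by (intro tendsto_intros lim)
    show "(\<lambda>n. d + 1 / Suc n) \<longlonglongrightarrow> d"
      using tendsto_add[OF tendsto_const LIMSEQ_inverse_real_of_nat, of d]
      by (simp add: inverse_eq_divide)
    show "\<exists>N. \<forall>n\<ge>N. norm (y - cs n) ^ 2 \<le> d + 1 / Suc n"
      using cs_close less_imp_le by blast
  qed
  then show ?thesis
    using \<open>p \<in> C\<close> d_le by (meson order_trans power2_le_imp_le norm_ge_zero)
qed

lemma nearest_point_inner_le:
  fixes C :: "'a::real_inner set"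
  assumes "convex C" and "p \<in> C" and nearest: "\<And>c. c \<in> C \<Longrightarrow> norm (y - p) \<le> norm (y - c)"
    and "c \<in> C"
  shows "inner (y - p) (c - p) \<le> 0"
proof -
  have "inner (y - p) (p - c) \<ge> 0"
  proof (rule inner_ge_zero_if_norm_le_norm_add[of 1])
    fix s :: real assume "0 < s" "s \<le> 1"
    then have "(1 - s) *\<^sub>R p + s *\<^sub>R c \<in> C"
      using \<open>convex C\<close> \<open>p \<in> C\<close> \<open>c \<in> C\<close> by (intro convexD) auto
    moreover have "y - ((1 - s) *\<^sub>R p + s *\<^sub>R c) = (y - p) + s *\<^sub>R (p - c)"
      by (simp add: algebra_simps)
    ultimately show "norm (y - p) \<le> norm ((y - p) + s *\<^sub>R (p - c))"
      using nearest by metis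
  qed simp
  then show ?thesis
    by (simp add: inner_diff_right)
qed

lemma orthogonal_projection_exists:
  fixes S :: "'a::{real_inner,complete_space} set"
  assumes "closed S" and "subspace S"
  shows "\<exists>p\<in>S. \<forall>s\<in>S. inner (y - p) s = 0"
proof -
  obtain p where "p \<in> S" and nearest: "\<And>c. c \<in> S \<Longrightarrow> norm (y - p) \<le> norm (y - c)"
    using nearest_point_exists[of S y] assms subspace_imp_convex subspace_0 by blast
  have "inner (y - p) s = 0" if "s \<in> S" for s
  proof -
    have "p + s \<in> S" "p - s \<in> S"
      using assms(2) \<open>p \<in> S\<close> that by (auto intro: subspace_add subspace_diff)
    then have "inner (y - p) s \<le> 0" "inner (y - p) (- s) \<le> 0"
      using nearest_point_inner_le[OF subspace_imp_convex[OF assms(2)] \<open>p \<in> S\<close> nearest]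
      by fastforce+
    then show ?thesis by simp
  qed
  then show ?thesis
    using \<open>p \<in> S\<close> by blast
qed

lemma Riesz_representation:
  fixes f :: "'a::{real_inner,complete_space} \<Rightarrow> real"
  assumes "bounded_linear f"
  shows "\<exists>p. \<forall>y. f y = inner p y"
proof (cases "\<forall>y. f y = 0")
  case True
  then show ?thesis by (intro exI[of _ 0]) simp
next
  case False
  then obtain y0 where "f y0 \<noteq> 0" by blast
  interpret f: bounded_linear f by fact
  define N where "N = {y. f y = 0}"
  have "closed N"
    unfolding N_def by (intro closed_Collect_eq continuous_intros f.continuous_on continuous_on_id)
  moreover have "subspace N"
    unfolding N_def subspace_def by (simp add: f.add f.scale)
  ultimately obtain q where "q \<in> N" and orth: "\<And>n. n \<in> N \<Longrightarrow> inner (y0 - q) n = 0"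
    using orthogonal_projection_exists by blast
  define z where "z = y0 - q"
  have "f z \<noteq> 0"
    using \<open>f y0 \<noteq> 0\<close> \<open>q \<in> N\<close> by (simp add: z_def N_def f.diff)
  then have "inner z z \<noteq> 0"
    by (metis f.zero inner_eq_zero_iff)
  have "f y = inner ((f z / inner z z) *\<^sub>R z) y" for y
  proof -
    have "y - (f y / f z) *\<^sub>R z \<in> N"
      using \<open>f z \<noteq> 0\<close> by (simp add: N_def f.diff f.scale)
    then have "inner z (y - (f y / f z) *\<^sub>R z) = 0"
      using orth[folded z_def] by blast
    then have "inner z y = (f y / f z) * inner z z"
      by (simp add: inner_diff_right)
    then show ?thesis
      using \<open>f z \<noteq> 0\<close> \<open>inner z z \<noteq> 0\<close> by (simp add: field_simps)
  qed
  then show ?thesis by blast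
qed

lemma subseq_convergent_inner_diagonal:
  fixes x :: "nat \<Rightarrow> 'a::real_inner"
  assumes bound: "\<And>n. norm (x n) \<le> B"
  shows "\<exists>\<phi>. strict_mono \<phi> \<and> (\<forall>m. convergent (\<lambda>k. inner (x (\<phi> k)) (x m)))"
proof -
  interpret S: subseqs "\<lambda>m s. convergent (\<lambda>k. inner (x (s k)) (x m))"
  proof
    fix m and s :: "nat \<Rightarrow> nat" assume "strict_mono s"
    have "bounded (range (\<lambda>k. inner (x (s k)) (x m)))"
    proof (rule boundedI)
      fix r assume "r \<in> range (\<lambda>k. inner (x (s k)) (x m))"
      then obtain k where r: "r = inner (x (s k)) (x m)" by blast
      have "norm r \<le> norm (x (s k)) * norm (x m)"
        unfolding r by (simp add: Cauchy_Schwarz_ineq2)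
      also have "\<dots> \<le> B * norm (x m)"
        using bound by (simp add: mult_right_mono)
      finally show "norm r \<le> B * norm (x m)" .
    qed
    then obtain l r where "strict_mono r" "((\<lambda>k. inner (x (s k)) (x m)) \<circ> r) \<longlonglongrightarrow> l"
      using bounded_imp_convergent_subsequence by blast
    then show "\<exists>r. strict_mono r \<and> convergent (\<lambda>k. inner (x ((s \<circ> r) k)) (x m))"
      by (auto simp: convergent_def o_def)
  qed
  have diag_tail: "convergent (\<lambda>k. inner (x ((S.diagseq \<circ> (+) (Suc m)) k)) (x m))" for m
  proof (rule S.diagseq_holds)
    fix r s n assume "strict_mono (r :: nat \<Rightarrow> nat)" "convergent (\<lambda>k. inner (x (s k)) (x n))"
    from convergent_subseq_convergent[OF this(2,1)]
    show "convergent (\<lambda>k. inner (x ((s \<circ> r) k)) (x n))"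
      by (simp add: o_def)
  qed
  have "convergent (\<lambda>k. inner (x (S.diagseq k)) (x m))" for m
  proof -
    have "convergent (\<lambda>k. inner (x (S.diagseq (k + Suc m))) (x m))"
      using diag_tail[of m] by (simp only: o_def add.commute[of "Suc m"])
    then show ?thesis
      using convergent_ignore_initial_segment[of "\<lambda>k. inner (x (S.diagseq k)) (x m)" "Suc m"]
      by simp
  qed
  then show ?thesis
    using S.subseq_diagseq by blast
qed

lemma subspace_convergent_inner:
  fixes x :: "nat \<Rightarrow> 'a::real_inner"
  shows "subspace {s. convergent (\<lambda>k. inner (x k) s)}"
  unfolding subspace_def convergent_def
  by (auto simp: inner_add_right intro: tendsto_add tendsto_mult_left)

lemma closed_convergent_inner:
  fixes x :: "nat \<Rightarrow> 'a::real_inner"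
  assumes bound: "\<And>n. norm (x n) \<le> B"
  shows "closed {s. convergent (\<lambda>k. inner (x k) s)}"
  unfolding closed_sequential_limits
proof (intro allI impI, elim conjE)
  fix t s assume t_conv: "\<forall>n. t n \<in> {s. convergent (\<lambda>k. inner (x k) s)}" and "t \<longlonglongrightarrow> s"
  have "B \<ge> 0"
    using bound[of 0] norm_ge_zero order_trans by blast
  have "Cauchy (\<lambda>k. inner (x k) s)"
  proof (rule CauchyI)
    fix e :: real assume "e > 0"
    obtain n where n: "norm (t n - s) < e / (4 * (B + 1))"
      using \<open>t \<longlonglongrightarrow> s\<close> \<open>e > 0\<close> \<open>B \<ge> 0\<close> unfolding LIMSEQ_iff
      by (metis divide_pos_pos le_refl mult_pos_pos zero_less_numeral add_nonneg_pos zero_less_one)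
    obtain M where M: "\<And>k l. k \<ge> M \<Longrightarrow> l \<ge> M \<Longrightarrow> norm (inner (x k) (t n) - inner (x l) (t n)) < e / 2"
      using t_conv CauchyD[of "\<lambda>k. inner (x k) (t n)" "e / 2"] \<open>e > 0\<close>
      by (auto simp: Cauchy_convergent_iff)
    have "norm (inner (x k) s - inner (x l) s) < e" if "k \<ge> M" "l \<ge> M" for k l
    proof -
      have "\<bar>inner (x k - x l) (s - t n)\<bar> \<le> norm (x k - x l) * norm (s - t n)"
        by (rule Cauchy_Schwarz_ineq2)
      also have "\<dots> \<le> (2 * B) * (e / (4 * (B + 1)))"
      proof (rule mult_mono)
        show "norm (x k - x l) \<le> 2 * B"
          using norm_triangle_ineq4[of "x k" "x l"] bound[of k] bound[of l] by simp
        show "norm (s - t n) \<le> e / (4 * (B + 1))"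
          using n by (simp add: norm_minus_commute)
      qed (use \<open>B \<ge> 0\<close> in auto)
      also have "\<dots> < e / 2"
        using \<open>B \<ge> 0\<close> \<open>e > 0\<close> by (simp add: field_simps)
      finally have "\<bar>inner (x k - x l) (s - t n)\<bar> < e / 2" .
      moreover have "inner (x k) s - inner (x l) s
          = inner (x k - x l) (s - t n) + (inner (x k) (t n) - inner (x l) (t n))"
        by (simp add: inner_diff_left inner_diff_right)
      ultimately show ?thesis
        using M[OF that] abs_triangle_ineq[of "inner (x k - x l) (s - t n)"
            "inner (x k) (t n) - inner (x l) (t n)"]
        unfolding real_norm_def by linarith
    qed
    then show "\<exists>M. \<forall>k\<ge>M. \<forall>l\<ge>M. norm (inner (x k) s - inner (x l) s) < e"
      by blast
  qed
  then show "s \<in> {s. convergent (\<lambda>k. inner (x k) s)}"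
    by (simp add: Cauchy_convergent_iff)
qed

lemma weakly_convergent_if_convergent_inner:
  fixes x :: "nat \<Rightarrow> 'a::{real_inner,complete_space}"
  assumes bound: "\<And>n. norm (x n) \<le> B" and conv: "\<And>y. convergent (\<lambda>k. inner (x k) y)"
  shows "\<exists>p. weakly_convergent_to x p"
proof -
  define f where "f y = lim (\<lambda>k. inner (x k) y)" for y
  have f_lim: "(\<lambda>k. inner (x k) y) \<longlonglongrightarrow> f y" for y
    unfolding f_def using conv convergent_LIMSEQ_iff by blast
  have "bounded_linear f"
  proof (rule bounded_linear_intro)
    show "f (a + b) = f a + f b" for a b
      using tendsto_add[OF f_lim f_lim, of a b]
      by (intro LIMSEQ_unique[OF f_lim]) (simp add: inner_add_right)
    show "f (r *\<^sub>R a) = r *\<^sub>R f a" for r a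
      using tendsto_mult_left[OF f_lim, of r a]
      by (intro LIMSEQ_unique[OF f_lim]) simp
    show "norm (f a) \<le> norm a * B" for a
    proof (rule LIMSEQ_le_const2)
      show "(\<lambda>k. norm (inner (x k) a)) \<longlonglongrightarrow> norm (f a)"
        by (intro tendsto_intros f_lim)
      have "norm (inner (x k) a) \<le> norm a * B" for k
        using Cauchy_Schwarz_ineq2[of "x k" a] mult_left_mono[OF bound[of k], of "norm a"]
        by (simp add: mult.commute)
      then show "\<exists>N. \<forall>k\<ge>N. norm (inner (x k) a) \<le> norm a * B"
        by blast
    qed
  qed
  then obtain p where "\<And>y. f y = inner p y"
    using Riesz_representation by blast
  then have "weakly_convergent_to x p"
    unfolding weakly_convergent_to_def using f_lim by simp
  then show ?thesis ..
qed

lemma weakly_convergent_subseq: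
  fixes x :: "nat \<Rightarrow> 'a::{real_inner,complete_space}"
  assumes bound: "\<And>n. norm (x n) \<le> B"
  shows "\<exists>\<phi> p. strict_mono \<phi> \<and> weakly_convergent_to (x \<circ> \<phi>) p"
proof -
  obtain \<phi> where "strict_mono \<phi>" and conv_x: "\<And>m. convergent (\<lambda>k. inner (x (\<phi> k)) (x m))"
    using subseq_convergent_inner_diagonal[of x B] bound by blast
  define W where "W = {s. convergent (\<lambda>k. inner (x (\<phi> k)) s)}"
  have "closed W" "subspace W"
    unfolding W_def using closed_convergent_inner[of "\<lambda>k. x (\<phi> k)" B] bound
    by (auto intro: subspace_convergent_inner)
  have conv_all: "convergent (\<lambda>k. inner ((x \<circ> \<phi>) k) y)" for y
  proof -
    obtain P where "P \<in> W" and orth: "\<And>s. s \<in> W \<Longrightarrow> inner (y - P) s = 0"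
      using orthogonal_projection_exists[OF \<open>closed W\<close> \<open>subspace W\<close>] by blast
    have "x (\<phi> k) \<in> W" for k
      unfolding W_def using conv_x by blast
    then have "inner y (x (\<phi> k)) = inner P (x (\<phi> k))" for k
      using orth by (simp add: inner_diff_left)
    then have "inner (x (\<phi> k)) y = inner (x (\<phi> k)) P" for k
      by (simp add: inner_commute)
    then show ?thesis
      using \<open>P \<in> W\<close> unfolding W_def by (simp add: o_def)
  qed
  have "norm ((x \<circ> \<phi>) n) \<le> B" for n
    using bound by simp
  then have "\<exists>p. weakly_convergent_to (x \<circ> \<phi>) p"
    using conv_all by (rule weakly_convergent_if_convergent_inner)
  then show ?thesis
    using \<open>strict_mono \<phi>\<close> by blast
qed

lemma weakly_convergent_if_weak_cluster_points_eq:
  fixes x :: "nat \<Rightarrow> 'a::{real_inner,complete_space}"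
  assumes bound: "\<And>n. norm (x n) \<le> B"
    and cluster: "\<And>\<phi> q. strict_mono \<phi> \<Longrightarrow> weakly_convergent_to (x \<circ> \<phi>) q \<Longrightarrow> q = p"
  shows "weakly_convergent_to x p"
  unfolding weakly_convergent_to_def
proof (intro allI, rule ccontr)
  fix y assume "\<not> (\<lambda>n. inner (x n) y) \<longlonglongrightarrow> inner p y"
  then obtain e where "e > 0" and far: "\<And>N. \<exists>n\<ge>N. e \<le> \<bar>inner (x n) y - inner p y\<bar>"
    unfolding LIMSEQ_def dist_real_def by (meson not_less)
  then have "infinite {n. e \<le> \<bar>inner (x n) y - inner p y\<bar>}"
    unfolding infinite_nat_iff_unbounded_le by blast
  then obtain \<psi> :: "nat \<Rightarrow> nat" where "strict_mono \<psi>"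
    and \<psi>_far: "\<And>k. e \<le> \<bar>inner (x (\<psi> k)) y - inner p y\<bar>"
    using infinite_enumerate by blast
  obtain \<rho> q where "strict_mono \<rho>" and "weakly_convergent_to (x \<circ> \<psi> \<circ> \<rho>) q"
    using weakly_convergent_subseq[of "x \<circ> \<psi>" B] bound by auto
  moreover have "strict_mono (\<psi> \<circ> \<rho>)"
    using \<open>strict_mono \<psi>\<close> \<open>strict_mono \<rho>\<close> by (rule strict_mono_o)
  ultimately have "weakly_convergent_to (x \<circ> (\<psi> \<circ> \<rho>)) p"
    using cluster by (metis comp_assoc)
  then obtain N where "\<bar>inner (x (\<psi> (\<rho> N))) y - inner p y\<bar> < e"
    using \<open>e > 0\<close> unfolding weakly_convergent_to_def LIMSEQ_def dist_real_def by fastforce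
  then show False
    using \<psi>_far[of "\<rho> N"] by simp
qed

lemma weakly_convergent_if_Fejer_monotone:
  fixes x :: "nat \<Rightarrow> 'a::{real_inner,complete_space}"
  assumes "F \<noteq> {}"
    and Fejer: "\<And>q n. q \<in> F \<Longrightarrow> norm (x (Suc n) - q) \<le> norm (x n - q)"
    and cluster: "\<And>\<phi> z. strict_mono \<phi> \<Longrightarrow> weakly_convergent_to (x \<circ> \<phi>) z \<Longrightarrow> z \<in> F"
  shows "\<exists>p\<in>F. weakly_convergent_to x p"
proof -
  have dist_decseq: "decseq (\<lambda>n. norm (x n - q))" if "q \<in> F" for q
    using Fejer[OF that] by (simp add: decseq_Suc_iff)
  have dist_conv: "\<exists>L. (\<lambda>n. norm (x n - q)) \<longlonglongrightarrow> L" if "q \<in> F" for q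
    using decseq_convergent[OF dist_decseq[OF that], of 0] by auto
  obtain q0 where "q0 \<in> F"
    using \<open>F \<noteq> {}\<close> by blast
  have bound: "norm (x n) \<le> norm (x 0 - q0) + norm q0" for n
    using decseqD[OF dist_decseq[OF \<open>q0 \<in> F\<close>], of 0 n] norm_triangle_sub[of "x n" q0] by simp
  have inner_conv: "convergent (\<lambda>n. inner (x n) (p - q))" if pF: "p \<in> F" and qF: "q \<in> F" for p q
  proof -
    obtain A C where "(\<lambda>n. norm (x n - p)) \<longlonglongrightarrow> A" "(\<lambda>n. norm (x n - q)) \<longlonglongrightarrow> C"
      using dist_conv[OF pF] dist_conv[OF qF] by blast
    then have "(\<lambda>n. (norm p ^ 2 - norm q ^ 2 - norm (x n - p) ^ 2 + norm (x n - q) ^ 2) / 2)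
        \<longlonglongrightarrow> (norm p ^ 2 - norm q ^ 2 - A ^ 2 + C ^ 2) / 2"
      by (intro tendsto_intros) auto
    moreover have polarization: "inner (x n) (p - q)
        = (norm p ^ 2 - norm q ^ 2 - norm (x n - p) ^ 2 + norm (x n - q) ^ 2) / 2" for n
      by (simp add: power2_norm_eq_inner inner_diff_left inner_diff_right inner_commute
          algebra_simps)
    ultimately show ?thesis
      unfolding convergent_def polarization by blast
  qed
  obtain \<phi> p where "strict_mono \<phi>" and "weakly_convergent_to (x \<circ> \<phi>) p"
    using weakly_convergent_subseq[of x, OF bound] by blast
  then have "p \<in> F"
    by (rule cluster)
  have "weakly_convergent_to x p"
  proof (rule weakly_convergent_if_weak_cluster_points_eq[of x, OF bound])
    fix \<psi> q assume "strict_mono \<psi>" and "weakly_convergent_to (x \<circ> \<psi>) q"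
    then have "q \<in> F"
      by (rule cluster)
    then obtain L where L: "(\<lambda>n. inner (x n) (p - q)) \<longlonglongrightarrow> L"
      using inner_conv[OF \<open>p \<in> F\<close> \<open>q \<in> F\<close>] by (auto simp: convergent_def)
    have "L = inner p (p - q)" "L = inner q (p - q)"
      using LIMSEQ_subseq_LIMSEQ[OF L \<open>strict_mono \<phi>\<close>] LIMSEQ_subseq_LIMSEQ[OF L \<open>strict_mono \<psi>\<close>]
        \<open>weakly_convergent_to (x \<circ> \<phi>) p\<close> \<open>weakly_convergent_to (x \<circ> \<psi>) q\<close>
      unfolding weakly_convergent_to_def by (auto simp: o_def intro: LIMSEQ_unique)
    then have "inner (p - q) (p - q) = 0"
      by (simp add: inner_diff_left)
    then show "q = p" by simp
  qed
  then show ?thesis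
    using \<open>p \<in> F\<close> by blast
qed

lemma jointly_firmly_nonexpansive_inner_ge_zero:
  fixes T :: "nat \<Rightarrow> 'a::real_inner \<Rightarrow> 'a"
  assumes gamma_pos: "\<And>n. \<gamma> n > 0" and "jointly_firmly_nonexpansive T \<gamma>"
  shows "inner (T n a - T m b) ((1 / \<gamma> n) *\<^sub>R (a - T n a) - (1 / \<gamma> m) *\<^sub>R (b - T m b)) \<ge> 0"
proof (rule inner_ge_zero_if_norm_le_norm_add[of "min (\<gamma> n) (\<gamma> m)"])
  show "0 < min (\<gamma> n) (\<gamma> m)"
    using gamma_pos by simp
  fix s :: real assume s: "0 < s" "s \<le> min (\<gamma> n) (\<gamma> m)"
  define \<alpha> where "\<alpha> = 1 - s / \<gamma> n"
  define \<beta> where "\<beta> = 1 - s / \<gamma> m"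
  have "\<alpha> \<in> {0..1}" "\<beta> \<in> {0..1}" "(1 - \<alpha>) * \<gamma> n = (1 - \<beta>) * \<gamma> m"
    using s gamma_pos[of n] gamma_pos[of m] by (auto simp: \<alpha>_def \<beta>_def field_simps)
  then have "norm (T n a - T m b)
      \<le> norm (((1 - \<alpha>) *\<^sub>R a + \<alpha> *\<^sub>R T n a) - ((1 - \<beta>) *\<^sub>R b + \<beta> *\<^sub>R T m b))"
    using \<open>jointly_firmly_nonexpansive T \<gamma>\<close> unfolding jointly_firmly_nonexpansive_def by blast
  also have "((1 - \<alpha>) *\<^sub>R a + \<alpha> *\<^sub>R T n a) - ((1 - \<beta>) *\<^sub>R b + \<beta> *\<^sub>R T m b)
      = (T n a - T m b) + s *\<^sub>R ((1 / \<gamma> n) *\<^sub>R (a - T n a) - (1 / \<gamma> m) *\<^sub>R (b - T m b))"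
    by (simp add: \<alpha>_def \<beta>_def algebra_simps divide_inverse)
  finally show "norm (T n a - T m b)
      \<le> norm ((T n a - T m b) + s *\<^sub>R ((1 / \<gamma> n) *\<^sub>R (a - T n a) - (1 / \<gamma> m) *\<^sub>R (b - T m b)))" .
qed

locale jointly_firmly_nonexpansive_iteration =
  fixes T :: "nat \<Rightarrow> 'a::real_inner \<Rightarrow> 'a" and \<gamma> :: "nat \<Rightarrow> real" and x :: "nat \<Rightarrow> 'a"
  assumes gamma_pos: "\<And>n. \<gamma> n > 0"
    and jfne: "jointly_firmly_nonexpansive T \<gamma>"
    and x_Suc: "\<And>n. x (Suc n) = T n (x n)"
begin

definition resid :: "nat \<Rightarrow> 'a" where
  "resid n = (1 / \<gamma> n) *\<^sub>R (x n - x (Suc n))"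

lemma diff_x_Suc_eq: "x n - x (Suc n) = \<gamma> n *\<^sub>R resid n"
  using gamma_pos[of n] by (simp add: resid_def)

lemma inner_resid_ge_zero:
  "inner (x (Suc n) - T m z) (resid n - (1 / \<gamma> m) *\<^sub>R (z - T m z)) \<ge> 0"
  using jointly_firmly_nonexpansive_inner_ge_zero[OF gamma_pos jfne, of n "x n" m z]
  by (simp add: resid_def x_Suc)

lemma Fejer_step:
  assumes "q \<in> (\<Inter>n. Fix (T n))"
  shows "norm (x (Suc n) - q) ^ 2 + norm (x n - x (Suc n)) ^ 2 \<le> norm (x n - q) ^ 2"
proof -
  have "T n q = q"
    using assms by (simp add: Fix_def)
  then have "0 \<le> inner (x (Suc n) - q) (resid n)"
    using inner_resid_ge_zero[of n n q] by simp
  then have "0 \<le> inner (x (Suc n) - q) (x n - x (Suc n))"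
    using gamma_pos[of n] by (simp add: diff_x_Suc_eq)
  moreover have "(x (Suc n) - q) + (x n - x (Suc n)) = x n - q"
    by simp
  then have "norm (x n - q) ^ 2
      = norm (x (Suc n) - q) ^ 2 + 2 * inner (x (Suc n) - q) (x n - x (Suc n)) + norm (x n - x (Suc n)) ^ 2"
    using power2_norm_add[of "x (Suc n) - q" "x n - x (Suc n)"] by simp
  ultimately show ?thesis
    by linarith
qed

lemma Fejer_monotone:
  assumes "q \<in> (\<Inter>n. Fix (T n))"
  shows "norm (x (Suc n) - q) \<le> norm (x n - q)"
proof (rule power2_le_imp_le)
  show "norm (x (Suc n) - q) ^ 2 \<le> norm (x n - q) ^ 2"
    using Fejer_step[OF assms, of n] zero_le_power2[of "norm (x n - x (Suc n))"] by linarith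
qed simp

lemma summable_norm_diff_x_Suc:
  assumes "q \<in> (\<Inter>n. Fix (T n))"
  shows "summable (\<lambda>n. norm (x n - x (Suc n)) ^ 2)"
proof (rule summableI_nonneg_bounded)
  have "(\<Sum>i<n. norm (x i - x (Suc i)) ^ 2) \<le> norm (x 0 - q) ^ 2 - norm (x n - q) ^ 2" for n
  proof (induction n)
    case (Suc n)
    then show ?case
      using Fejer_step[OF assms, of n] by simp
  qed simp
  then show "(\<Sum>i<n. norm (x i - x (Suc i)) ^ 2) \<le> norm (x 0 - q) ^ 2" for n
    by (smt (verit) zero_le_power2)
qed simp

lemma norm_resid_decseq: "decseq (\<lambda>n. norm (resid n))"
proof (rule decseq_SucI)
  fix n
  have "0 \<le> inner (x (Suc (Suc n)) - x (Suc n)) (resid (Suc n) - resid n)"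
    using inner_resid_ge_zero[of "Suc n" n "x n"] by (simp add: x_Suc resid_def)
  also have "x (Suc (Suc n)) - x (Suc n) = - \<gamma> (Suc n) *\<^sub>R resid (Suc n)"
    using diff_x_Suc_eq[of "Suc n"] by (simp add: algebra_simps)
  finally have "inner (resid (Suc n)) (resid (Suc n) - resid n) \<le> 0"
    using gamma_pos[of "Suc n"] by (simp add: mult_le_0_iff zero_le_mult_iff)
  then have "norm (resid (Suc n)) ^ 2 \<le> inner (resid (Suc n)) (resid n)"
    by (simp add: inner_diff_right power2_norm_eq_inner)
  also have "\<dots> \<le> norm (resid (Suc n)) * norm (resid n)"
    by (rule real_inner_class.Cauchy_Schwarz_ineq2[THEN order_trans[OF abs_ge_self]])
  finally show "norm (resid (Suc n)) \<le> norm (resid n)"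
    by (cases "resid (Suc n) = 0") (auto simp: power2_eq_square)
qed

lemma norm_resid_tendsto_zero:
  assumes "\<not> summable (\<lambda>n. (\<gamma> n)\<^sup>2)" and "q \<in> (\<Inter>n. Fix (T n))"
  shows "(\<lambda>n. norm (resid n)) \<longlonglongrightarrow> 0"
proof -
  obtain L where L: "(\<lambda>n. norm (resid n)) \<longlonglongrightarrow> L" and L_le: "\<And>n. L \<le> norm (resid n)"
    using decseq_convergent[OF norm_resid_decseq, of 0] by auto
  have "L \<ge> 0"
    using L by (rule LIMSEQ_le_const) simp
  have "\<not> L > 0"
  proof
    assume "L > 0"
    have gamma_sq_le: "norm ((\<gamma> n)\<^sup>2) \<le> (1 / L ^ 2) * norm (x n - x (Suc n)) ^ 2" for n
    proof -
      have "\<gamma> n * L \<le> norm (x n - x (Suc n))"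
        using L_le[of n] gamma_pos[of n] by (simp add: diff_x_Suc_eq mult_left_mono)
      then have "(\<gamma> n * L) ^ 2 \<le> norm (x n - x (Suc n)) ^ 2"
        using gamma_pos[of n] \<open>L > 0\<close> by (intro power_mono) auto
      then show ?thesis
        using \<open>L > 0\<close> by (simp add: field_simps power_mult_distrib)
    qed
    have "summable (\<lambda>n. (1 / L ^ 2) * norm (x n - x (Suc n)) ^ 2)"
      by (rule summable_mult[OF summable_norm_diff_x_Suc[OF assms(2)]])
    then have "summable (\<lambda>n. (\<gamma> n)\<^sup>2)"
      by (rule summable_comparison_test'[where N = 0]) (rule gamma_sq_le)
    then show False
      using assms(1) by blast
  qed
  then show ?thesis
    using L \<open>L \<ge> 0\<close> by simp
qed

lemma norm_diff_x_le_initial: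
  assumes "q \<in> (\<Inter>n. Fix (T n))"
  shows "norm (x n - q) \<le> norm (x 0 - q)"
  using Fejer_monotone[OF assms] by (induction n) (auto intro: order_trans)

lemma inner_defect_le_norm_resid:
  "inner (x (Suc n) - T m z) ((1 / \<gamma> m) *\<^sub>R (z - T m z)) \<le> norm (x (Suc n) - T m z) * norm (resid n)"
proof -
  have "inner (x (Suc n) - T m z) ((1 / \<gamma> m) *\<^sub>R (z - T m z)) \<le> inner (x (Suc n) - T m z) (resid n)"
    using inner_resid_ge_zero[of n m z] by (simp add: inner_diff_right)
  also have "\<dots> \<le> norm (x (Suc n) - T m z) * norm (resid n)"
    by (rule real_inner_class.Cauchy_Schwarz_ineq2[THEN order_trans[OF abs_ge_self]])
  finally show ?thesis .
qed

lemma weak_cluster_point_in_Fix: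
  assumes "\<not> summable (\<lambda>n. (\<gamma> n)\<^sup>2)" and q: "q \<in> (\<Inter>n. Fix (T n))"
    and "strict_mono \<phi>" and weak: "weakly_convergent_to (x \<circ> \<phi>) z"
  shows "z \<in> (\<Inter>n. Fix (T n))"
proof -
  have "T m z = z" for m
  proof -
    define w where "w = T m z"
    define v where "v = (1 / \<gamma> m) *\<^sub>R (z - w)"
    define C where "C = norm (x 0 - q) + norm (q - w)"
    have x_w: "norm (x n - w) \<le> C" for n
      using order_trans[OF norm_triangle_ineq[of "x n - q" "q - w"]
          add_right_mono[OF norm_diff_x_le_initial[OF q, of n]]]
      unfolding C_def by simp
    have inner_le: "inner (x (Suc n) - w) v \<le> C * norm (resid n)" for n
    proof -
      have "inner (x (Suc n) - w) v \<le> norm (x (Suc n) - w) * norm (resid n)"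
        unfolding w_def v_def by (rule inner_defect_le_norm_resid)
      also have "\<dots> \<le> C * norm (resid n)"
        using x_w by (rule mult_right_mono) simp
      finally show ?thesis .
    qed
    \<comment> \<open>The shift from x (Suc j) to the subsequence is absorbed by the monotonicity of the residuals.\<close>
    have le: "inner (x (\<phi> (Suc k)) - w) v \<le> C * norm (resid k)" for k
    proof -
      define j where "j = \<phi> (Suc k) - 1"
      have "Suc k \<le> \<phi> (Suc k)"
        using \<open>strict_mono \<phi>\<close> by (rule seq_suble)
      then have "\<phi> (Suc k) = Suc j" and "k \<le> j"
        by (simp_all add: j_def)
      moreover have "C * norm (resid j) \<le> C * norm (resid k)"
        using decseqD[OF norm_resid_decseq \<open>k \<le> j\<close>] by (rule mult_left_mono) (simp add: C_def)
      ultimately show ?thesis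
        using inner_le[of j] by simp
    qed
    have "(\<lambda>k. inner (x (\<phi> (Suc k)) - w) v) \<longlonglongrightarrow> inner (z - w) v"
    proof -
      have "(\<lambda>k. inner (x (\<phi> k)) v) \<longlonglongrightarrow> inner z v"
        using weak unfolding weakly_convergent_to_def comp_def by blast
      then have "(\<lambda>k. inner (x (\<phi> k)) v - inner w v) \<longlonglongrightarrow> inner z v - inner w v"
        by (rule tendsto_diff) (rule tendsto_const)
      then have "(\<lambda>k. inner (x (\<phi> (Suc k))) v - inner w v) \<longlonglongrightarrow> inner z v - inner w v"
        by (rule LIMSEQ_Suc)
      then show ?thesis
        by (simp add: inner_diff_left)
    qed
    moreover have "(\<lambda>k. C * norm (resid k)) \<longlonglongrightarrow> C * 0"
      by (intro tendsto_intros norm_resid_tendsto_zero[OF assms(1) q])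
    ultimately have "inner (z - w) v \<le> C * 0"
      by (rule LIMSEQ_le) (use le in blast)
    then have "(1 / \<gamma> m) * inner (z - w) (z - w) \<le> 0"
      by (simp add: v_def)
    then have "inner (z - w) (z - w) \<le> 0"
      using gamma_pos[of m] by (simp add: divide_le_0_iff)
    then have "inner (z - w) (z - w) = 0"
      using inner_ge_zero[of "z - w"] by linarith
    then show ?thesis
      by (simp add: w_def)
  qed
  then show ?thesis
    by (simp add: Fix_def)
qed

end

theorem theorem3p15:
  fixes T :: "nat \<Rightarrow> 'a::{real_inner, complete_space} \<Rightarrow> 'a"
    and \<gamma> :: "nat \<Rightarrow> real"
    and x :: 'a
  assumes "\<And>n. \<gamma> n > 0"
    and "\<not> summable (\<lambda>n. (\<gamma> n)\<^sup>2)"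
    and "jointly_firmly_nonexpansive T \<gamma>"
    and "(\<Inter>n. Fix (T n)) \<noteq> {}"
  shows "\<exists>p \<in> (\<Inter>n. Fix (T n)).
           weakly_convergent_to (\<lambda>n. rec_nat x (\<lambda>k xk. T k xk) n) p"
proof -
  interpret jointly_firmly_nonexpansive_iteration T \<gamma> "\<lambda>n. rec_nat x (\<lambda>k xk. T k xk) n"
    using assms(1,3) by unfold_locales simp_all
  obtain q where q: "q \<in> (\<Inter>n. Fix (T n))"
    using assms(4) by blast
  show ?thesis
  proof (rule weakly_convergent_if_Fejer_monotone[OF assms(4)])
    show "norm (rec_nat x T (Suc n) - p) \<le> norm (rec_nat x T n - p)"
      if "p \<in> (\<Inter>n. Fix (T n))" for p n
      using that by (rule Fejer_monotone)
    show "z \<in> (\<Inter>n. Fix (T n))"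
      if "strict_mono \<phi>" and "weakly_convergent_to (rec_nat x T \<circ> \<phi>) z" for \<phi> z
      using assms(2) q that by (rule weak_cluster_point_in_Fix)
  qed
qed

end
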